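(* Let $q$ be an odd prime, let $g$ be a primitive root modulo $q$, let $\omega=e^{2\pi i/(q-1)}$, and let $\chi_g$ be the Dirichlet character modulo $q$ with $\chi_g(n)=\omega^{\mathrm{ind}_g(n)}$ if $q\nmid n$ and $\chi_g(n)=0$ otherwise, where $\mathrm{ind}_g(n)$ is defined modulo $q-1$ by $n\equiv g^{\mathrm{ind}_g(n)}\pmod q$. For $1\le r\le q-2$ put $$C(q,r,\chi_g)=\prod_{p:\ \chi_g(p)=\omega^r}\Big(1-\frac{1}{p^{(q-1)/(r,q-1)}}\Big),$$ the product over all primes $p$ with $\chi_g(p)=\omega^r$, where $(r,q-1)$ denotes the greatest common divisor, and define $$C(q)=\prod_{r=1}^{q-2}C(q,r,\chi_g)^{(r,q-1)}.$$ For a prime $p\ne q$ let $f_p$ be the smallest integer $k\ge 1$ with $p^k\equiv 1\pmod q$. Then $$C(q)=\prod_{p\neq q,\ f_p\ge 2}\Big(1-\frac{1}{p^{f_p}}\Big)^{\frac{q-1}{f_p}}.$$ *)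

theory Defs
  imports "HOL-Analysis.Analysis" "HOL-Number_Theory.Number_Theory"
begin

text \<open>Index (discrete logarithm) of n to base g modulo q: the least k with n = g^k mod q
  (ind is only defined modulo q-1; omega^ind does not depend on the representative).\<close>
definition ind_g :: "nat \<Rightarrow> nat \<Rightarrow> nat \<Rightarrow> nat" where
  "ind_g q g n = (LEAST k. [g ^ k = n] (mod q))"

definition omega_q :: "nat \<Rightarrow> complex" where
  "omega_q q = exp (2 * of_real pi * \<i> / of_nat (q - 1))"

definition chi_g :: "nat \<Rightarrow> nat \<Rightarrow> nat \<Rightarrow> complex" where
  "chi_g q g n = (if q dvd n then 0 else omega_q q ^ ind_g q g n)"

definition C_qr :: "nat \<Rightarrow> nat \<Rightarrow> nat \<Rightarrow> real" where
  "C_qr q g r = (\<Prod>p. if prime p \<and> chi_g q g p = omega_q q ^ r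
                       then 1 - 1 / real p ^ ((q - 1) div gcd r (q - 1)) else 1)"

definition C_q :: "nat \<Rightarrow> nat \<Rightarrow> real" where
  "C_q q g = (\<Prod>r = 1..q - 2. C_qr q g r ^ gcd r (q - 1))"

end

theory Submission
  imports Defs
begin

text \<open>
  A prime \<open>p \<noteq> q\<close> has \<open>\<chi>\<^sub>g(p) = \<omega>\<^sup>i\<close> with \<open>i = ind\<^sub>g(p) < q - 1\<close>, so it occurs in exactly one of
  the products \<open>C(q,r,\<chi>\<^sub>g)\<close>, namely for \<open>r = i\<close>, and in none when \<open>i = 0\<close>. Since \<open>p \<equiv> g\<^sup>i\<close> and \<open>g\<close>
  has order \<open>q - 1\<close>, the order of \<open>p\<close> is \<open>f\<^sub>p = (q - 1)/(i, q - 1)\<close>: this is the exponent of \<open>p\<close> in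
  \<open>C(q,i,\<chi>\<^sub>g)\<close>, and the outer exponent \<open>(i, q - 1)\<close> is \<open>(q - 1)/f\<^sub>p\<close>; moreover \<open>i = 0\<close> iff \<open>f\<^sub>p = 1\<close>.
  All exponents \<open>(q - 1)/(r, q - 1)\<close> with \<open>0 < r < q - 1\<close> are at least 2, so every product
  converges absolutely and the finite product of the infinite products \<open>C(q,r,\<chi>\<^sub>g)\<close> is the
  infinite product of the pointwise finite products.
\<close>

lemma two_le_div_gcd:
  fixes r n :: nat
  assumes "0 < r" "r < n"
  shows "2 \<le> n div gcd r n"
proof (rule ccontr)
  assume "\<not> 2 \<le> n div gcd r n"
  then have "n div gcd r n * gcd r n \<le> 1 * gcd r n"
    by (intro mult_le_mono1) simp
  then have "n \<le> gcd r n"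
    by simp
  moreover have "gcd r n \<le> r"
    using assms by simp
  ultimately show False
    using assms by simp
qed

lemma convergent_prod_one_minus_inverse_power:
  fixes e :: nat
  assumes "e \<ge> 2"
  shows "convergent_prod (\<lambda>n. if P n then 1 - 1 / real n ^ e else 1)"
proof (intro abs_convergent_prod_imp_convergent_prod summable_imp_abs_convergent_prod)
  have bound: "norm (norm ((if P n then 1 - 1 / real n ^ e else 1) - 1)) \<le> inverse (real n ^ 2)" for n
  proof (cases "n = 0")
    case False
    then have "real n ^ 2 \<le> real n ^ e"
      using assms by (intro power_increasing) auto
    then have "1 / real n ^ e \<le> 1 / real n ^ 2"
      using False by (intro divide_left_mono) auto
    then show ?thesis by (simp add: divide_inverse)
  qed (use assms in \<open>simp add: power_0_left\<close>)
  show "summable (\<lambda>n. norm ((if P n then 1 - 1 / real n ^ e else 1) - 1))"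
    by (rule summable_comparison_test[OF _ inverse_power_summable[of 2]]) (use bound in auto)
qed

lemma omega_q_power_eq_1_iff:
  assumes "q \<ge> 2"
  shows "omega_q q ^ k = 1 \<longleftrightarrow> (q - 1) dvd k"
proof -
  have "omega_q q ^ k = exp (2 * of_real pi * \<i> * of_nat k / of_nat (q - 1))"
    unfolding omega_q_def by (simp flip: exp_of_nat_mult add: algebra_simps)
  then show ?thesis
    using complex_root_unity_eq_1[of "q - 1" k] assms by simp
qed

lemma inj_on_omega_q_power:
  assumes "q \<ge> 2"
  shows "inj_on (\<lambda>k. omega_q q ^ k) {..<q - 1}"
proof -
  have "a = b" if "a \<le> b" "b < q - 1" "omega_q q ^ a = omega_q q ^ b" for a b
  proof -
    have "omega_q q ^ b = omega_q q ^ a * omega_q q ^ (b - a)"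
      using \<open>a \<le> b\<close> by (simp flip: power_add)
    then have "omega_q q ^ (b - a) = 1"
      using that(3) by (simp add: omega_q_def)
    then have "(q - 1) dvd (b - a)"
      using omega_q_power_eq_1_iff[OF assms] by simp
    then show "a = b"
      using that by (auto dest: dvd_imp_le)
  qed
  then show ?thesis
    by (metis inj_onI lessThan_iff linorder_le_cases)
qed

lemma residue_primroot_power_cong_exists:
  assumes "q > 1" "residue_primroot q g" "coprime n q"
  shows "\<exists>k < totient q. [g ^ k = n] (mod q)"
proof -
  have "\<not> q dvd n"
    using assms coprime_common_divisor[of n q q] by auto
  then have "n mod q \<in> totatives q"
    using assms by (auto simp: in_totatives_iff coprime_commute dvd_eq_mod_eq_0 intro: less_imp_le)
  then obtain k where "k < totient q" "n mod q = g ^ k mod q"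
    using residue_primroot_is_generator[OF assms(1,2)] by (force simp: bij_betw_def)
  then show ?thesis
    by (auto simp: cong_def)
qed

lemma
  assumes "q > 1" "residue_primroot q g" "coprime n q"
  shows ind_g_less_totient: "ind_g q g n < totient q"
    and power_ind_g_cong: "[g ^ ind_g q g n = n] (mod q)"
proof -
  obtain k where "k < totient q" "[g ^ k = n] (mod q)"
    using residue_primroot_power_cong_exists[OF assms] by blast
  then show "ind_g q g n < totient q" "[g ^ ind_g q g n = n] (mod q)"
    unfolding ind_g_def by (auto intro: LeastI Least_le[THEN le_less_trans])
qed

lemma ord_eq_totient_div_gcd_ind_g:
  assumes "q > 1" "residue_primroot q g" "coprime n q"
  shows "ord q n = totient q div gcd (ind_g q g n) (totient q)"
proof -
  have "ord q n = ord q (g ^ ind_g q g n)"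
    using power_ind_g_cong[OF assms] by (simp add: ord_cong cong_sym)
  also have "\<dots> = ord q g div gcd (ind_g q g n) (ord q g)"
    using assms(2) by (intro ord_power) (simp add: residue_primroot_def)
  finally show ?thesis
    using assms(2) by (simp add: residue_primroot_def)
qed

lemma
  assumes "prime q" "residue_primroot q g" "\<not> q dvd n"
  shows ind_g_less_prime_modulus: "ind_g q g n < q - 1"
    and ord_eq_div_gcd_ind_g_prime_modulus: "ord q n = (q - 1) div gcd (ind_g q g n) (q - 1)"
proof -
  have "coprime n q"
    using prime_imp_coprime[OF assms(1,3)] by (simp add: coprime_commute)
  then show "ind_g q g n < q - 1" "ord q n = (q - 1) div gcd (ind_g q g n) (q - 1)"
    using ind_g_less_totient[OF prime_gt_1_nat assms(2)] ord_eq_totient_div_gcd_ind_g[OF prime_gt_1_nat assms(2)]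
      assms(1) by (simp_all add: totient_prime)
qed

lemma chi_g_eq_omega_q_power_iff:
  assumes "prime q" "residue_primroot q g" "r < q - 1"
  shows "chi_g q g n = omega_q q ^ r \<longleftrightarrow> \<not> q dvd n \<and> ind_g q g n = r"
proof (cases "q dvd n")
  case False
  have "ind_g q g n < q - 1"
    using assms(1,2) False by (rule ind_g_less_prime_modulus)
  moreover have "q \<ge> 2"
    using assms(1) prime_ge_2_nat by blast
  ultimately show ?thesis
    using False assms(3) inj_on_omega_q_power[of q] by (auto simp: chi_g_def inj_on_def)
qed (simp add: chi_g_def omega_q_def)

definition C_qr_factor :: "nat \<Rightarrow> nat \<Rightarrow> nat \<Rightarrow> nat \<Rightarrow> real" where
  "C_qr_factor q g r p = (if prime p \<and> chi_g q g p = omega_q q ^ r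
     then 1 - 1 / real p ^ ((q - 1) div gcd r (q - 1)) else 1)"

definition C_q_factor :: "nat \<Rightarrow> nat \<Rightarrow> real" where
  "C_q_factor q p = (if prime p \<and> p \<noteq> q \<and> ord q p \<ge> 2
     then (1 - 1 / real p ^ ord q p) ^ ((q - 1) div ord q p) else 1)"

lemma C_qr_factor_has_prod:
  assumes "0 < r" "r < q - 1"
  shows "C_qr_factor q g r has_prod C_qr q g r"
proof -
  have "convergent_prod (C_qr_factor q g r)"
    unfolding C_qr_factor_def using assms
    by (intro convergent_prod_one_minus_inverse_power two_le_div_gcd)
  then show ?thesis
    unfolding C_qr_def C_qr_factor_def by (rule convergent_prod_has_prod)
qed

lemma prod_C_qr_factor_eq_C_q_factor:
  assumes "prime q" "residue_primroot q g"
  shows "(\<Prod>r = 1..q - 2. C_qr_factor q g r p ^ gcd r (q - 1)) = C_q_factor q p"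
proof (cases "prime p \<and> p \<noteq> q")
  case False
  have "C_qr_factor q g r p = 1" if "r \<in> {1..q - 2}" for r
  proof -
    have "r < q - 1"
      using that by auto
    then show ?thesis
      using False assms chi_g_eq_omega_q_power_iff[of q g r p]
      by (auto simp: C_qr_factor_def)
  qed
  then show ?thesis
    using False by (auto simp: C_q_factor_def)
next
  case True
  then have "\<not> q dvd p"
    using assms(1) by (metis primes_dvd_imp_eq)
  define i where "i = ind_g q g p"
  have i: "i < q - 1"
    using assms \<open>\<not> q dvd p\<close> unfolding i_def by (rule ind_g_less_prime_modulus)
  have ord: "ord q p = (q - 1) div gcd i (q - 1)"
    using assms \<open>\<not> q dvd p\<close> unfolding i_def by (rule ord_eq_div_gcd_ind_g_prime_modulus)
  have "C_qr_factor q g r p = (if r = i then 1 - 1 / real p ^ ord q p else 1)"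
    if "r \<in> {1..q - 2}" for r
  proof -
    have "r < q - 1"
      using that by auto
    then show ?thesis
      using True \<open>\<not> q dvd p\<close> assms chi_g_eq_omega_q_power_iff[of q g r p]
      by (auto simp: C_qr_factor_def ord i_def)
  qed
  then have "(\<Prod>r = 1..q - 2. C_qr_factor q g r p ^ gcd r (q - 1))
      = (\<Prod>r = 1..q - 2. if r = i then (1 - 1 / real p ^ ord q p) ^ gcd r (q - 1) else 1)"
    by (intro prod.cong) simp_all
  also have "\<dots> = (if i \<in> {1..q - 2} then (1 - 1 / real p ^ ord q p) ^ gcd i (q - 1) else 1)"
    by simp
  also have "\<dots> = C_q_factor q p"
  proof (cases "i = 0")
    case False
    then have "ord q p \<ge> 2"
      using i by (simp add: ord two_le_div_gcd)
    moreover have "(q - 1) div ord q p = gcd i (q - 1)"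
      using i by (simp add: ord div_div_eq_right)
    ultimately show ?thesis
      using True False i by (simp add: C_q_factor_def)
  qed (use True i in \<open>simp add: C_q_factor_def ord\<close>)
  finally show ?thesis .
qed

theorem proposition1:
  fixes q g :: nat
  assumes "prime q" and "odd q" and "residue_primroot q g"
  shows "C_q q g =
    (\<Prod>p. if prime p \<and> p \<noteq> q \<and> ord q p \<ge> 2
           then (1 - 1 / real p ^ ord q p) ^ ((q - 1) div ord q p) else 1)"
proof -
  have "(\<lambda>p. \<Prod>r = 1..q - 2. C_qr_factor q g r p ^ gcd r (q - 1)) has_prod C_q q g"
    unfolding C_q_def by (intro has_prod_prod has_prod_power C_qr_factor_has_prod) auto
  then have "C_q_factor q has_prod C_q q g"
    using prod_C_qr_factor_eq_C_q_factor[OF assms(1,3)] by simp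
  then show ?thesis
    unfolding C_q_factor_def by (rule has_prod_unique)
qed

end
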